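(* In the setting described in the context (consecutive Newton–Anderson iterates $x_{k-1},x_k,x_{k+1}$ with $x_k,x_{k-1}\in B_{\hat r}(x^* )\setminus S$ under Assumption (A)), if the set $R^e_{k+1}$ is nonempty then its minimum $r^e_{k+1}$ satisfies $r^e_{k+1}\le 1$.
   Context: $f:\mathbb{R}^n\to\mathbb{R}^n$ is $C^3$ with $f(x^* )=0$; norms are Euclidean; $N=\operatorname{null}f'(x^* )\neq\{0\}$, $R=\operatorname{range}f'(x^* )$, $\mathbb{R}^n=N\oplus R$, $P_N,P_R$ orthogonal projections; $S=\{x:\det f'(x)=0\}$. Iterates: $e_k=x_k-x^*$, $w_{k+1}=-f'(x_k)^{-1}f(x_k)$; Newton–Anderson: $x_1=x_0+w_1$, and for $k\ge1$, $\gamma_{k+1}=(w_{k+1}-w_k)^Tw_{k+1}/\|w_{k+1}-w_k\|^2$, $x_{k+1}=x_k+w_{k+1}-\gamma_{k+1}(x_k-x_{k-1}+w_{k+1}-w_k)$. $\hat D(x):N\to N$, $v\mapsto P_Nf''(x^* )(x-x^*,v)$. Assumption (A): for $x\in B_{\hat r}(x^* )\setminus S$, $\hat D(x)$ is invertible on $N$, and $f'(x)^{-1}=\hat D(x)^{-1}P_N+\mathcal{O}(1)$ for $\|x-x^*\|<\hat r$. $T_kv=\tfrac12\hat D(x_k)^{-1}P_Nf''(x_k)(e_k,v)$ (range in $N$). Set $q_{k-1}^k:=e_{k+1}-\tfrac12\big((1-\gamma_{k+1})P_Ne_k+\gamma_{k+1}P_Ne_{k-1}\big)-\big((1-\gamma_{k+1})T_kP_Re_k+\gamma_{k+1}T_{k-1}P_Re_{k-1}\big)$.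 Define the five vectors $a_1=\tfrac{1-\gamma_{k+1}}{2}P_Ne_k$, $a_2=\tfrac{\gamma_{k+1}}{2}P_Ne_{k-1}$, $a_3=(1-\gamma_{k+1})T_kP_Re_k$, $a_4=\gamma_{k+1}T_{k-1}P_Re_{k-1}$, $a_5=P_Nq_{k-1}^k$, so that $P_Ne_{k+1}=a_1+\dots+a_5$. $S^e_{k+1}$ is the set of sums $\sum_{i\in I}a_i$ over nonempty proper subsets $I\subsetneq\{1,\dots,5\}$; $R^e_{k+1}=\{\|P_Ne_{k+1}-E\|/\|E\|:E\in S^e_{k+1},\,E\ne0\}$, and $r^e_{k+1}=\min R^e_{k+1}$. *)

theory Defs
  imports "HOL-Analysis.Analysis"
begin

definition orth_proj :: "(real^'n) set \<Rightarrow> real^'n \<Rightarrow> real^'n" where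
  "orth_proj V v = (THE p. p \<in> V \<and> (\<forall>w\<in>V. inner (v - p) w = 0))"

text \<open>f is C^3 on R^n with Jacobian J (f'(x) = J x) and second derivative H
  (f''(x)(u,v) = H x u v, the derivative of y |-> f'(y) v in direction u),
  and a continuous third derivative.\<close>
definition C3_with :: "(real^'n \<Rightarrow> real^'n) \<Rightarrow> (real^'n \<Rightarrow> real^'n^'n)
    \<Rightarrow> (real^'n \<Rightarrow> real^'n \<Rightarrow> real^'n \<Rightarrow> real^'n) \<Rightarrow> bool" where
  "C3_with f J H \<longleftrightarrow>
     (\<forall>x. (f has_derivative (\<lambda>h. J x *v h)) (at x)) \<and>
     (\<forall>x v. ((\<lambda>y. J y *v v) has_derivative (\<lambda>u. H x u v)) (at x)) \<and>
     (\<exists>T3. (\<forall>x u v. ((\<lambda>y. H y u v) has_derivative (\<lambda>w. T3 x w u v)) (at x)) \<and>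
           (\<forall>w u v. continuous_on UNIV (\<lambda>x. T3 x w u v)))"

definition NA_w :: "(real^'n \<Rightarrow> real^'n) \<Rightarrow> (real^'n \<Rightarrow> real^'n^'n) \<Rightarrow> (nat \<Rightarrow> real^'n) \<Rightarrow> nat \<Rightarrow> real^'n" where
  "NA_w f J x k = - (matrix_inv (J (x (k - 1))) *v f (x (k - 1)))"

definition NA_gamma :: "(real^'n \<Rightarrow> real^'n) \<Rightarrow> (real^'n \<Rightarrow> real^'n^'n) \<Rightarrow> (nat \<Rightarrow> real^'n) \<Rightarrow> nat \<Rightarrow> real" where
  "NA_gamma f J x k =
     inner (NA_w f J x k - NA_w f J x (k - 1)) (NA_w f J x k) / (norm (NA_w f J x k - NA_w f J x (k - 1)))\<^sup>2"

definition newton_anderson :: "(real^'n \<Rightarrow> real^'n) \<Rightarrow> (real^'n \<Rightarrow> real^'n^'n) \<Rightarrow> (nat \<Rightarrow> real^'n) \<Rightarrow> bool" where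
  "newton_anderson f J x \<longleftrightarrow>
     x 1 = x 0 + NA_w f J x 1 \<and>
     (\<forall>k\<ge>1. x (k + 1) = x k + NA_w f J x (k + 1)
        - NA_gamma f J x (k + 1) *\<^sub>R (x k - x (k - 1) + NA_w f J x (k + 1) - NA_w f J x k))"

definition nullsp :: "(real^'n \<Rightarrow> real^'n^'n) \<Rightarrow> real^'n \<Rightarrow> (real^'n) set" where
  "nullsp J xs = {v. J xs *v v = 0}"

definition rangesp :: "(real^'n \<Rightarrow> real^'n^'n) \<Rightarrow> real^'n \<Rightarrow> (real^'n) set" where
  "rangesp J xs = range (\<lambda>v. J xs *v v)"

definition singset :: "(real^'n \<Rightarrow> real^'n^'n) \<Rightarrow> (real^'n) set" where
  "singset J = {x. det (J x) = 0}"

definition Dhat :: "(real^'n \<Rightarrow> real^'n^'n) \<Rightarrow> (real^'n \<Rightarrow> real^'n \<Rightarrow> real^'n \<Rightarrow> real^'n)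
    \<Rightarrow> real^'n \<Rightarrow> real^'n \<Rightarrow> real^'n \<Rightarrow> real^'n" where
  "Dhat J H xs x v = orth_proj (nullsp J xs) (H xs (x - xs) v)"

definition Dhat_inv :: "(real^'n \<Rightarrow> real^'n^'n) \<Rightarrow> (real^'n \<Rightarrow> real^'n \<Rightarrow> real^'n \<Rightarrow> real^'n)
    \<Rightarrow> real^'n \<Rightarrow> real^'n \<Rightarrow> real^'n \<Rightarrow> real^'n" where
  "Dhat_inv J H xs x = inv_into (nullsp J xs) (Dhat J H xs x)"

definition assumption_A :: "(real^'n \<Rightarrow> real^'n^'n) \<Rightarrow> (real^'n \<Rightarrow> real^'n \<Rightarrow> real^'n \<Rightarrow> real^'n)
    \<Rightarrow> real^'n \<Rightarrow> real \<Rightarrow> bool" where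
  "assumption_A J H xs rhat \<longleftrightarrow>
     (\<forall>x \<in> ball xs rhat - singset J.
        bij_betw (Dhat J H xs x) (nullsp J xs) (nullsp J xs)) \<and>
     (\<exists>C. \<forall>x \<in> ball xs rhat - singset J. \<forall>v.
        norm (matrix_inv (J x) *v v - Dhat_inv J H xs x (orth_proj (nullsp J xs) v)) \<le> C * norm v)"

definition T_op :: "(real^'n \<Rightarrow> real^'n^'n) \<Rightarrow> (real^'n \<Rightarrow> real^'n \<Rightarrow> real^'n \<Rightarrow> real^'n)
    \<Rightarrow> real^'n \<Rightarrow> real^'n \<Rightarrow> real^'n \<Rightarrow> real^'n" where
  "T_op J H xs xk v = (1/2) *\<^sub>R Dhat_inv J H xs xk (orth_proj (nullsp J xs) (H xk (xk - xs) v))"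

definition avec :: "(real^'n \<Rightarrow> real^'n) \<Rightarrow> (real^'n \<Rightarrow> real^'n^'n) \<Rightarrow> (real^'n \<Rightarrow> real^'n \<Rightarrow> real^'n \<Rightarrow> real^'n)
    \<Rightarrow> real^'n \<Rightarrow> (nat \<Rightarrow> real^'n) \<Rightarrow> nat \<Rightarrow> nat \<Rightarrow> real^'n" where
  "avec f J H xs x k i =
    (let PN = orth_proj (nullsp J xs); PR = orth_proj (rangesp J xs);
         e = (\<lambda>j. x j - xs); g = NA_gamma f J x (k + 1);
         q = e (k + 1) - (1/2) *\<^sub>R ((1 - g) *\<^sub>R PN (e k) + g *\<^sub>R PN (e (k - 1)))
               - ((1 - g) *\<^sub>R T_op J H xs (x k) (PR (e k))
                  + g *\<^sub>R T_op J H xs (x (k - 1)) (PR (e (k - 1))))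
     in if i = 1 then ((1 - g) / 2) *\<^sub>R PN (e k)
        else if i = 2 then (g / 2) *\<^sub>R PN (e (k - 1))
        else if i = 3 then (1 - g) *\<^sub>R T_op J H xs (x k) (PR (e k))
        else if i = 4 then g *\<^sub>R T_op J H xs (x (k - 1)) (PR (e (k - 1)))
        else PN q)"

definition Se_set where
  "Se_set f J H xs x k =
     {(\<Sum>i\<in>I. avec f J H xs x k i) | I. I \<subseteq> {1..5::nat} \<and> I \<noteq> {} \<and> I \<noteq> {1..5}}"

definition Re_set where
  "Re_set f J H xs x k =
     {norm (orth_proj (nullsp J xs) (x (k + 1) - xs) - E) / norm E | E.
        E \<in> Se_set f J H xs x k \<and> E \<noteq> 0}"

end

theory Submission imports Defs begin

text \<open>Assumption (A) makes \<open>Dhat\<close> a bijection of N near x*, so T_k and T_{k-1} take values in N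
  and projecting the definition of q onto N gives P_N e_{k+1} = a_1 + ... + a_5. Hence for
  E = sum of a_i over I the numerator P_N e_{k+1} - E is the complementary subsum over {1..5} - I.
  Of two complementary subsums, not both zero, the one of larger norm is a nonzero element of
  S^e_{k+1} whose ratio is at most 1. Nothing else about f or the iteration is needed.\<close>

lemma orth_proj_characterization:
  fixes V :: "(real^'n) set"
  assumes "subspace V"
  shows "orth_proj V v \<in> V \<and> (\<forall>w\<in>V. inner (v - orth_proj V v) w = 0)"
proof -
  obtain y z where yz: "y \<in> span V" "\<forall>w\<in>span V. orthogonal z w" "v = y + z"
    using orthogonal_subspace_decomp_exists[of V v] by metis
  have span_V: "span V = V" using assms by (rule span_eq_iff[THEN iffD2])
  have y: "y \<in> V \<and> (\<forall>w\<in>V. inner (v - y) w = 0)"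
    using yz span_V by (simp add: orthogonal_def)
  have "p = y" if "p \<in> V" "\<forall>w\<in>V. inner (v - p) w = 0" for p
  proof -
    have "p - y \<in> V" using that(1) y assms by (simp add: subspace_diff)
    then have "inner (v - y) (p - y) - inner (v - p) (p - y) = 0" using that y by simp
    then have "inner (p - y) (p - y) = 0" by (simp add: inner_diff_left)
    then show ?thesis by simp
  qed
  with y have "orth_proj V v = y" unfolding orth_proj_def by (intro the_equality) blast+
  with y show ?thesis by simp
qed

lemma orth_proj_in:
  fixes V :: "(real^'n) set"
  assumes "subspace V" shows "orth_proj V v \<in> V"
  using orth_proj_characterization[OF assms] by blast

lemma orth_proj_unique:
  fixes V :: "(real^'n) set"
  assumes "subspace V" "p \<in> V" "\<forall>w\<in>V. inner (v - p) w = 0"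
  shows "orth_proj V v = p"
proof -
  have proj: "orth_proj V v \<in> V \<and> (\<forall>w\<in>V. inner (v - orth_proj V v) w = 0)"
    using orth_proj_characterization[OF assms(1)] .
  then have "p - orth_proj V v \<in> V" using assms by (simp add: subspace_diff)
  then have "inner (v - orth_proj V v) (p - orth_proj V v) - inner (v - p) (p - orth_proj V v) = 0"
    using assms proj by simp
  then have "inner (p - orth_proj V v) (p - orth_proj V v) = 0" by (simp add: inner_diff_left)
  then show ?thesis by simp
qed

lemma orth_proj_id:
  fixes V :: "(real^'n) set"
  assumes "subspace V" "v \<in> V" shows "orth_proj V v = v"
  using orth_proj_unique[OF assms] by simp

lemma linear_orth_proj:
  fixes V :: "(real^'n) set"
  assumes "subspace V" shows "linear (orth_proj V)"
proof
  have in_V: "orth_proj V u \<in> V" for u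
    using orth_proj_in[OF assms] .
  have orth: "inner (u - orth_proj V u) w = 0" if "w \<in> V" for u w
    using orth_proj_characterization[OF assms] that by blast
  show "orth_proj V (u + v) = orth_proj V u + orth_proj V v" for u v
  proof (rule orth_proj_unique[OF assms])
    show "orth_proj V u + orth_proj V v \<in> V" using in_V assms by (simp add: subspace_add)
    show "\<forall>w\<in>V. inner (u + v - (orth_proj V u + orth_proj V v)) w = 0"
    proof
      fix w assume "w \<in> V"
      then have "inner (u - orth_proj V u) w + inner (v - orth_proj V v) w = 0"
        using orth by simp
      then show "inner (u + v - (orth_proj V u + orth_proj V v)) w = 0"
        by (simp add: inner_diff_left inner_add_left algebra_simps)
    qed
  qed
  show "orth_proj V (c *\<^sub>R u) = c *\<^sub>R orth_proj V u" for c u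
  proof (rule orth_proj_unique[OF assms])
    show "c *\<^sub>R orth_proj V u \<in> V" using in_V assms by (simp add: subspace_scale)
    show "\<forall>w\<in>V. inner (c *\<^sub>R u - c *\<^sub>R orth_proj V u) w = 0"
    proof
      fix w assume "w \<in> V"
      then have "c * inner (u - orth_proj V u) w = 0" using orth by simp
      then show "inner (c *\<^sub>R u - c *\<^sub>R orth_proj V u) w = 0"
        by (simp add: inner_diff_left algebra_simps)
    qed
  qed
qed

lemma subspace_nullsp: "subspace (nullsp J xs)"
  unfolding nullsp_def subspace_def
  by (simp add: matrix_vector_right_distrib matrix_vector_mult_scaleR)

lemma T_op_in_nullsp:
  assumes "assumption_A J H xs rhat" "y \<in> ball xs rhat - singset J"
  shows "T_op J H xs y v \<in> nullsp J xs"
proof -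
  have "bij_betw (Dhat J H xs y) (nullsp J xs) (nullsp J xs)"
    using assms unfolding assumption_A_def by blast
  then have "orth_proj (nullsp J xs) (H y (y - xs) v) \<in> Dhat J H xs y ` nullsp J xs"
    using orth_proj_in[OF subspace_nullsp] by (simp add: bij_betw_def)
  then have "Dhat_inv J H xs y (orth_proj (nullsp J xs) (H y (y - xs) v)) \<in> nullsp J xs"
    unfolding Dhat_inv_def by (rule inv_into_into)
  then show ?thesis
    unfolding T_op_def using subspace_nullsp subspace_scale by blast
qed

lemma sum_avec_eq_orth_proj_error:
  assumes "assumption_A J H xs rhat"
    and "x k \<in> ball xs rhat - singset J" "x (k - 1) \<in> ball xs rhat - singset J"
  shows "(\<Sum>i\<in>{1..5}. avec f J H xs x k i) = orth_proj (nullsp J xs) (x (k + 1) - xs)"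
proof -
  define N where "N = nullsp J xs"
  define PN where "PN = orth_proj N"
  define g where "g = NA_gamma f J x (k + 1)"
  define u where "u = PN (x k - xs)"
  define w where "w = PN (x (k - 1) - xs)"
  define t where "t = T_op J H xs (x k) (orth_proj (rangesp J xs) (x k - xs))"
  define s where "s = T_op J H xs (x (k - 1)) (orth_proj (rangesp J xs) (x (k - 1) - xs))"
  define c where "c = (1/2) *\<^sub>R ((1 - g) *\<^sub>R u + g *\<^sub>R w)"
  define d where "d = (1 - g) *\<^sub>R t + g *\<^sub>R s"
  have sN: "subspace N" unfolding N_def by (rule subspace_nullsp)
  have "u \<in> N" "w \<in> N" unfolding u_def w_def PN_def using orth_proj_in[OF sN] by blast+
  then have c: "c \<in> N" unfolding c_def using sN by (simp add: subspace_add subspace_scale)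
  have "t \<in> N" "s \<in> N"
    unfolding t_def s_def N_def using T_op_in_nullsp assms by blast+
  then have d: "d \<in> N" unfolding d_def using sN by (simp add: subspace_add subspace_scale)
  have "avec f J H xs x k 5 = PN (x (k + 1) - xs - c - d)"
    unfolding avec_def Let_def c_def d_def u_def w_def t_def s_def g_def PN_def N_def by simp
  also have "\<dots> = PN (x (k + 1) - xs) - c - d"
    unfolding PN_def using linear_diff[OF linear_orth_proj[OF sN]] orth_proj_id[OF sN] c d
    by simp
  finally have a5: "avec f J H xs x k 5 = PN (x (k + 1) - xs) - c - d" .
  have "avec f J H xs x k 1 + avec f J H xs x k 2 = c"
    unfolding avec_def Let_def c_def u_def w_def g_def PN_def N_def
    by (simp add: scaleR_add_right)
  moreover have "avec f J H xs x k 3 + avec f J H xs x k 4 = d"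
    unfolding avec_def Let_def d_def t_def s_def g_def by simp
  moreover have "(\<Sum>i\<in>{1..5}. avec f J H xs x k i)
      = (avec f J H xs x k 1 + avec f J H xs x k 2) + (avec f J H xs x k 3 + avec f J H xs x k 4)
        + avec f J H xs x k 5"
    by (simp add: numeral_eq_Suc add.commute add.left_commute)
  ultimately show ?thesis unfolding a5 PN_def N_def by simp
qed

lemma Min_complementary_subsum_ratio_le_1:
  fixes a :: "'i \<Rightarrow> 'a::real_normed_vector" and A :: "'i set"
  defines "R \<equiv> {norm (sum a A - E) / norm E | E.
      E \<in> {sum a I | I. I \<subseteq> A \<and> I \<noteq> {} \<and> I \<noteq> A} \<and> E \<noteq> 0}"
  assumes fin: "finite A" and nonempty: "R \<noteq> {}"
  shows "Min R \<le> 1"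
proof -
  have ratio: "norm (sum a A - sum a I) / norm (sum a I) \<in> R"
    if "I \<subseteq> A" "I \<noteq> {}" "I \<noteq> A" "sum a I \<noteq> 0" for I
    using that unfolding R_def by blast
  have "R \<subseteq> (\<lambda>I. norm (sum a A - sum a I) / norm (sum a I)) ` Pow A"
    unfolding R_def by blast
  then have fin_R: "finite R" using fin by (meson finite_Pow_iff finite_imageI finite_subset)
  obtain I where I: "I \<subseteq> A" "I \<noteq> {}" "I \<noteq> A" "sum a I \<noteq> 0"
    using nonempty unfolding R_def by blast
  have complement: "sum a A - sum a I = sum a (A - I)"
    using I(1) fin by (simp add: sum_diff)
  show ?thesis
  proof (cases "norm (sum a (A - I)) \<le> norm (sum a I)")
    case True
    then have "norm (sum a A - sum a I) / norm (sum a I) \<le> 1"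
      using I(4) complement by simp
    then show ?thesis using fin_R ratio[OF I] by (meson Min_le order_trans)
  next
    case False
    have "sum a A - sum a (A - I) = sum a I" using complement by (simp add: algebra_simps)
    then have "norm (sum a A - sum a (A - I)) / norm (sum a (A - I)) \<le> 1"
      using False by (simp add: divide_le_eq_1)
    moreover have "norm (sum a A - sum a (A - I)) / norm (sum a (A - I)) \<in> R"
      using I False by (intro ratio) auto
    ultimately show ?thesis using fin_R by (meson Min_le order_trans)
  qed
qed

theorem lemma4p1:
  fixes f :: "real^'n \<Rightarrow> real^'n" and J :: "real^'n \<Rightarrow> real^'n^'n"
    and H :: "real^'n \<Rightarrow> real^'n \<Rightarrow> real^'n \<Rightarrow> real^'n"
    and xs :: "real^'n" and x :: "nat \<Rightarrow> real^'n" and rhat :: real and k :: nat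
  assumes "C3_with f J H"
    and "f xs = 0"
    and "nullsp J xs \<noteq> {0}"
    and "nullsp J xs \<inter> rangesp J xs = {0}"
    and "\<forall>v. \<exists>a\<in>nullsp J xs. \<exists>b\<in>rangesp J xs. v = a + b"
    and "rhat > 0"
    and "assumption_A J H xs rhat"
    and "newton_anderson f J x"
    and "k \<ge> 1"
    and "x k \<in> ball xs rhat - singset J"
    and "x (k - 1) \<in> ball xs rhat - singset J"
    and "Re_set f J H xs x k \<noteq> {}"
  shows "Min (Re_set f J H xs x k) \<le> 1"
proof -
  have "orth_proj (nullsp J xs) (x (k + 1) - xs) = (\<Sum>i\<in>{1..5}. avec f J H xs x k i)"
    using sum_avec_eq_orth_proj_error[OF assms(7,10,11)] by simp
  then show ?thesis
    using Min_complementary_subsum_ratio_le_1[of "{1..5::nat}" "avec f J H xs x k"] assms(12)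
    unfolding Re_set_def Se_set_def by simp
qed

end
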